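(* Let $(V,\mu)$ be an infinite, connected, locally finite, non-parabolic weighted graph, $q>1$, $\sigma\in\ell^+(V)$, $\sigma\not\equiv0$. Suppose $-\Delta u\ge\sigma u^q$ in $V$ admits a positive solution. Then for every $o\in V$ with $\sigma(o)>0$, $$\sum_{y\in V}g(o,y)^q\nu(y)<\infty,$$ and there exist $r_0>0$ and $C>0$ such that for all $r>r_0$, $$\sup_{x\in V}\sum_{y\in V:\ g(o,y)>r^{-1}} g(x,y)\nu(y)\le C r^{q-1}.$$ Conversely, if $g$ satisfies the (3G) inequality and both displayed conditions hold for some $o\in V$, then $-\Delta u\ge\sigma u^q$ in $V$ (equivalently $u\ge G(\sigma u^q)$ in $V$) admits a positive solution.
   Context: Weighted graph: $\mu_{xy}=\mu_{yx}\ge0$, $\mu_{xy}>0$ iff $x\sim y$, $\mu(x)=\sum_{y\sim x}\mu_{xy}$; Laplacian $\Delta u(x)=\frac1{\mu(x)}\sum_{y\sim x}\mu_{xy}(u(y)-u(x))$. The random walk has $P(x,y)=\mu_{xy}/\mu(x)$, $P_n(x,y)=\mathbb P_x[X_n=y]$; the Green function is $g(x,y)=\sum_{n\ge0}P_n(x,y)/\mu(y)$ (finite when the graph is non-parabolic, i.e. not every nonnegative superharmonic function is constant), and $Gf(x)=\sum_y g(x,y)f(y)\mu(y)$. $\nu(x)=\sigma(x)\mu(x)$. A positive solution means $u(x)>0$ for all $x$. The (3G) inequality: there is $\kappa\ge1$ with $\frac1{g(x,y)}\le\kappa\big(\frac1{g(x,z)}+\frac1{g(z,y)}\big)$ for all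 $x,y,z\in V$. *)

theory Defs
  imports "HOL-Analysis.Analysis"
begin

definition weighted_graph :: "('a \<Rightarrow> 'a \<Rightarrow> real) \<Rightarrow> bool" where
  "weighted_graph mu \<longleftrightarrow> (\<forall>x y. mu x y = mu y x \<and> mu x y \<ge> 0)"

definition adj :: "('a \<Rightarrow> 'a \<Rightarrow> real) \<Rightarrow> 'a \<Rightarrow> 'a \<Rightarrow> bool" where
  "adj mu x y \<longleftrightarrow> mu x y > 0"

definition nbrs :: "('a \<Rightarrow> 'a \<Rightarrow> real) \<Rightarrow> 'a \<Rightarrow> 'a set" where
  "nbrs mu x = {y. adj mu x y}"

definition locally_finite :: "('a \<Rightarrow> 'a \<Rightarrow> real) \<Rightarrow> bool" where
  "locally_finite mu \<longleftrightarrow> (\<forall>x. finite (nbrs mu x))"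

definition connected_graph :: "('a \<Rightarrow> 'a \<Rightarrow> real) \<Rightarrow> bool" where
  "connected_graph mu \<longleftrightarrow> (\<forall>x y. (adj mu)\<^sup>*\<^sup>* x y)"

definition vmeas :: "('a \<Rightarrow> 'a \<Rightarrow> real) \<Rightarrow> 'a \<Rightarrow> real" where
  "vmeas mu x = (\<Sum>y\<in>nbrs mu x. mu x y)"

definition laplacian :: "('a \<Rightarrow> 'a \<Rightarrow> real) \<Rightarrow> ('a \<Rightarrow> real) \<Rightarrow> 'a \<Rightarrow> real" where
  "laplacian mu u x = (1 / vmeas mu x) * (\<Sum>y\<in>nbrs mu x. mu x y * (u y - u x))"

definition non_parabolic :: "('a \<Rightarrow> 'a \<Rightarrow> real) \<Rightarrow> bool" where
  "non_parabolic mu \<longleftrightarrow>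
     \<not> (\<forall>u::'a \<Rightarrow> real. (\<forall>x. u x \<ge> 0) \<and> (\<forall>x. laplacian mu u x \<le> 0) \<longrightarrow> (\<exists>c. \<forall>x. u x = c))"

definition trans_prob :: "('a \<Rightarrow> 'a \<Rightarrow> real) \<Rightarrow> 'a \<Rightarrow> 'a \<Rightarrow> real" where
  "trans_prob mu x y = mu x y / vmeas mu x"

fun nstep :: "('a \<Rightarrow> 'a \<Rightarrow> real) \<Rightarrow> nat \<Rightarrow> 'a \<Rightarrow> 'a \<Rightarrow> real" where
  "nstep mu 0 x y = (if x = y then 1 else 0)"
| "nstep mu (Suc n) x y = (\<Sum>z\<in>nbrs mu x. trans_prob mu x z * nstep mu n z y)"

definition green :: "('a \<Rightarrow> 'a \<Rightarrow> real) \<Rightarrow> 'a \<Rightarrow> 'a \<Rightarrow> real" where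
  "green mu x y = (\<Sum>n. nstep mu n x y) / vmeas mu y"

definition three_G :: "('a \<Rightarrow> 'a \<Rightarrow> real) \<Rightarrow> bool" where
  "three_G mu \<longleftrightarrow> (\<exists>\<kappa>\<ge>1. \<forall>x y z.
      1 / green mu x y \<le> \<kappa> * (1 / green mu x z + 1 / green mu z y))"

definition has_pos_solution :: "('a \<Rightarrow> 'a \<Rightarrow> real) \<Rightarrow> ('a \<Rightarrow> real) \<Rightarrow> real \<Rightarrow> bool" where
  "has_pos_solution mu \<sigma> q \<longleftrightarrow>
     (\<exists>u. (\<forall>x. u x > 0) \<and> (\<forall>x. - laplacian mu u x \<ge> \<sigma> x * u x powr q))"

end

theory Submission
  imports Defs
begin

(*
  Non-parabolicity makes the walk transient, so that g is finite: a nonconstant nonnegative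
  superharmonic function, truncated at a level crossed by an edge, is strictly superharmonic
  somewhere, and any strict supersolution bounds the expected number of visits.

  A positive supersolution u of -Delta u >= sigma u^q dominates
  c g(.,o) with c = mu(o) sigma(o) u(o)^q (minimum principle).  For a positive superharmonic
  H <= g(.,o), the function H Phi(u/H), with Phi concave and Phi'(s) = s^-q, is a supersolution
  of -Delta v >= sigma H^q bounded by a multiple of H, so G(sigma H^q) <= C H.  With
  H = min(g(.,o), 1/r) this is the level-set estimate.  With H = g(.,o) it bounds the
  potential of sigma g(.,o)^q by C g(.,o); testing this against the equilibrium potential of
  a finite set and using the reversibility of the walk bounds the sums of g(o,.)^q nu.

  Under (3G), G(sigma g(.,o)^q) <= K g(.,o): split the sum according to whether
  g(o,y) is small compared with g(x,o), and use the level-set estimate for the rest.  Then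
  w = l g(.,o) + (2l)^q G(sigma g(.,o)^q) is a positive supersolution once (2l)^q K = l.
*)

definition walk_op :: "('a \<Rightarrow> 'a \<Rightarrow> real) \<Rightarrow> ('a \<Rightarrow> real) \<Rightarrow> 'a \<Rightarrow> real" where
  "walk_op mu f x = (\<Sum>z\<in>nbrs mu x. trans_prob mu x z * f z)"

primrec walk_reach :: "('a \<Rightarrow> 'a \<Rightarrow> real) \<Rightarrow> nat \<Rightarrow> 'a \<Rightarrow> 'a set" where
  "walk_reach mu 0 x = {x}"
| "walk_reach mu (Suc n) x = (\<Union>z\<in>nbrs mu x. walk_reach mu n z)"

definition visits :: "('a \<Rightarrow> 'a \<Rightarrow> real) \<Rightarrow> 'a \<Rightarrow> 'a \<Rightarrow> real" where
  "visits mu x y = (\<Sum>n. nstep mu n x y)"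

definition power_profile :: "real \<Rightarrow> real \<Rightarrow> real \<Rightarrow> real" where
  "power_profile q a s = (a - s powr (1 - q)) / (q - 1)"

definition green_level_bound :: "('a \<Rightarrow> 'a \<Rightarrow> real) \<Rightarrow> real \<Rightarrow> ('a \<Rightarrow> real) \<Rightarrow> 'a \<Rightarrow> bool" where
  "green_level_bound mu q \<nu> p \<longleftrightarrow>
     (\<exists>r0>0. \<exists>C>0. \<forall>r>r0. \<forall>x.
        (\<lambda>y. green mu x y * \<nu> y) summable_on {y. green mu p y > 1 / r} \<and>
        (\<Sum>\<^sub>\<infinity>y\<in>{y. green mu p y > 1 / r}. green mu x y * \<nu> y) \<le> C * r powr (q - 1))"

lemma nonneg_summable_on_infsum_le:
  fixes f :: "'b \<Rightarrow> real"
  assumes "\<And>y. y \<in> A \<Longrightarrow> f y \<ge> 0" "\<And>F. finite F \<Longrightarrow> F \<subseteq> A \<Longrightarrow> sum f F \<le> B"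
  shows "f summable_on A \<and> infsum f A \<le> B"
proof
  show summable: "f summable_on A"
    using assms by (intro nonneg_bdd_above_summable_on bdd_aboveI[where M = B]) auto
  show "infsum f A \<le> B"
    using assms by (intro infsum_le_finite_sums[OF summable])
qed

lemma has_sum_finite_sum:
  fixes g :: "'i \<Rightarrow> 'b \<Rightarrow> 'c::topological_comm_monoid_add"
  assumes "finite I" "\<And>i. i \<in> I \<Longrightarrow> (g i has_sum s i) A"
  shows "((\<lambda>y. \<Sum>i\<in>I. g i y) has_sum (\<Sum>i\<in>I. s i)) A"
  using assms by (induction I rule: finite_induct) (auto intro: has_sum_add)

lemma rtranclp_crossing_edge:
  assumes "r\<^sup>*\<^sup>* a b" "P a" "\<not> P b"
  shows "\<exists>x y. r x y \<and> P x \<and> \<not> P y"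
  using assms by (induction rule: converse_rtranclp_induct) blast+

lemma powr_tangent_le:
  fixes q s t :: real
  assumes q: "q > 1" and s: "s > 0" and t: "t > 0"
  shows "t powr (1 - q) + (1 - q) * t powr (- q) * (s - t) \<le> s powr (1 - q)"
proof -
  have convex: "convex_on {0<..} (\<lambda>x::real. x powr (1 - q))"
  proof (rule convex_on_realI[where f' = "\<lambda>x. (1 - q) * x powr (- q)"])
    fix x :: real assume "x \<in> {0<..}"
    then show "((\<lambda>x. x powr (1 - q)) has_real_derivative (1 - q) * x powr (- q)) (at x)"
      using has_real_derivative_powr[of x "1 - q"] by simp
  next
    fix x y :: real assume "x \<in> {0<..}" "y \<in> {0<..}" "x \<le> y"
    then show "(1 - q) * x powr (- q) \<le> (1 - q) * y powr (- q)"
      using q by (intro mult_left_mono_neg powr_mono2') auto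
  qed simp
  have "(1 - q) * t powr (- q) * (s - t) \<le> s powr (1 - q) - t powr (1 - q)"
    using s t has_real_derivative_powr[of t "1 - q"]
    by (intro convex_on_imp_above_tangent[OF convex])
      (auto simp: interior_open has_field_derivative_at_within)
  then show ?thesis by simp
qed

lemma power_profile_tangent:
  fixes q s v a :: real
  assumes q: "q > 1" and s: "s > 0" and v: "v > 0"
  shows "power_profile q a s \<le> power_profile q a v + v powr (- q) * (s - v)"
proof -
  have "a - s powr (1 - q) \<le> (a - v powr (1 - q)) + (q - 1) * (v powr (- q) * (s - v))"
    using powr_tangent_le[OF q s v] by (simp add: algebra_simps)
  then have "(a - s powr (1 - q)) / (q - 1)
      \<le> ((a - v powr (1 - q)) + (q - 1) * (v powr (- q) * (s - v))) / (q - 1)"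
    using q by (intro divide_right_mono) auto
  also have "\<dots> = (a - v powr (1 - q)) / (q - 1) + v powr (- q) * (s - v)"
    using q by (simp add: field_simps)
  finally show ?thesis
    by (simp add: power_profile_def)
qed

lemma powr_le_power_profile:
  fixes q c s :: real
  assumes q: "q > 1" and c: "c > 0" and s: "c \<le> s"
  shows "s powr (1 - q) \<le> power_profile q (q * c powr (1 - q)) s"
proof -
  have "q * s powr (1 - q) \<le> q * c powr (1 - q)"
    using q c s by (intro mult_left_mono powr_mono2') auto
  then show ?thesis
    using q by (simp add: power_profile_def field_simps)
qed

lemma min_le_of_mult_le_sum:
  fixes a b k :: real
  assumes a: "a > 0" and b: "b > 0" and ab: "a * b \<le> k * (a + b)"
  shows "min a b \<le> 2 * k"
proof -
  have "0 < k * (a + b)"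
    using ab mult_pos_pos[OF a b] by linarith
  then have k: "k > 0"
    using a b by (simp add: zero_less_mult_iff)
  show ?thesis
  proof (cases "a \<le> b")
    case True
    then have "k * (a + b) \<le> k * (b + b)"
      using k by (intro mult_left_mono) auto
    then have "a * b \<le> 2 * k * b"
      using ab by (simp add: algebra_simps)
    then show ?thesis
      using True b by simp
  next
    case False
    then have "k * (a + b) \<le> k * (a + a)"
      using k by (intro mult_left_mono) auto
    then have "b * a \<le> 2 * k * a"
      using ab by (simp add: algebra_simps)
    then show ?thesis
      using False a by simp
  qed
qed

text \<open>(3G) for the triangle x, p, y, with \<open>a = g(x,y)\<close>, \<open>b = g(p,y)\<close>, \<open>m = g(x,p)\<close>.\<close>

lemma three_G_product_bound:
  fixes a b m \<kappa> q :: real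
  assumes a: "a > 0" and b: "b > 0" and m: "m > 0" and \<kappa>: "\<kappa> \<ge> 1" and q: "q > 1"
    and ab: "1 / b \<le> \<kappa> * (1 / a + 1 / m)" and am: "1 / m \<le> \<kappa> * (1 / a + 1 / b)"
  shows "a * b powr q
           \<le> 2 * \<kappa> * m * b powr q + (if b > m / (2 * \<kappa>) then (2 * \<kappa> * m) powr q * a else 0)"
proof -
  have near: "a * b powr q \<le> 2 * \<kappa> * m * b powr q" if "a \<le> 2 * \<kappa> * m"
    using that b by (intro mult_right_mono) auto
  have far_nonneg: "(2 * \<kappa> * m) powr q * a \<ge> 0"
    using a by simp
  show ?thesis
  proof (cases "b > m / (2 * \<kappa>)")
    case False
    then have bm: "\<kappa> * b \<le> m / 2"
      using \<kappa> by (simp add: field_simps)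
    have "a * m \<le> \<kappa> * b * m + \<kappa> * a * b"
      using ab a b m by (simp add: field_simps)
    also have "\<kappa> * a * b \<le> a * m / 2"
      using mult_left_mono[OF bm, of a] a by (simp add: mult_ac)
    finally have "a \<le> 2 * \<kappa> * b"
      using m by (simp add: field_simps)
    also have "\<dots> \<le> m"
      using bm by simp
    also have "\<dots> \<le> 2 * \<kappa> * m"
      using mult_right_mono[of 1 "2 * \<kappa>" m] \<kappa> m by simp
    finally show ?thesis
      using near False by simp
  next
    case True
    have "a * b \<le> (\<kappa> * m) * (a + b)"
      using am a b m by (simp add: field_simps)
    then have "min a b \<le> 2 * (\<kappa> * m)"
      by (rule min_le_of_mult_le_sum[OF a b])
    then consider "a \<le> 2 * \<kappa> * m" | "b \<le> 2 * \<kappa> * m"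
      by linarith
    then show ?thesis
    proof cases
      case 1
      then show ?thesis using near far_nonneg by simp
    next
      case 2
      have "a * b powr q = a * b * b powr (q - 1)"
        using b powr_mult_base[of b "q - 1"] by simp
      also have "\<dots> \<le> a * (2 * \<kappa> * m) * (2 * \<kappa> * m) powr (q - 1)"
        using a b 2 q by (intro mult_mono powr_mono2) auto
      also have "\<dots> = (2 * \<kappa> * m) powr q * a"
        using \<kappa> m powr_mult_base[of "2 * \<kappa> * m" "q - 1"] by simp
      finally show ?thesis
        using True \<kappa> m by (simp add: add_increasing)
    qed
  qed
qed

lemma exists_powr_scale_fixpoint:
  fixes K q :: real
  assumes K: "K > 0" and q: "q > 1"
  shows "\<exists>l>0. (2 * l) powr q * K = l"
proof -
  define B where "B = 2 powr q * K"
  have B: "B > 0" using K by (simp add: B_def)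
  define l where "l = B powr (- 1 / (q - 1))"
  have l: "l > 0" using B by (simp add: l_def)
  have "l powr (q - 1) = B powr (- 1)"
    using q by (simp add: l_def powr_powr)
  then have l_powr: "l powr (q - 1) * B = 1"
    using B by (simp add: powr_minus_divide)
  have "(2 * l) powr q * K = B * (l * l powr (q - 1))"
    using l powr_mult_base[of l "q - 1"] by (simp add: B_def powr_mult)
  also have "\<dots> = l"
    using l_powr by (simp add: mult_ac)
  finally show ?thesis using l by blast
qed

locale connected_weighted_graph =
  fixes mu :: "'a \<Rightarrow> 'a \<Rightarrow> real"
  assumes weights: "weighted_graph mu"
    and nontrivial: "\<exists>a b :: 'a. a \<noteq> b"
    and connected: "connected_graph mu"
    and loc_finite: "locally_finite mu"
begin

lemma mu_sym: "mu x y = mu y x"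
  using weights by (simp add: weighted_graph_def)

lemma mu_nonneg: "mu x y \<ge> 0"
  using weights by (simp add: weighted_graph_def)

lemma finite_nbrs: "finite (nbrs mu x)"
  using loc_finite by (simp add: locally_finite_def)

lemma mu_eq_0_outside_nbrs: "y \<notin> nbrs mu x \<Longrightarrow> mu x y = 0"
  using mu_nonneg[of x y] by (simp add: nbrs_def adj_def)

lemma vmeas_pos: "vmeas mu x > 0"
proof -
  obtain y where "y \<noteq> x" using nontrivial by (metis (full_types))
  moreover have "(adj mu)\<^sup>*\<^sup>* x y" using connected by (simp add: connected_graph_def)
  ultimately obtain z where "adj mu x z" by (metis converse_rtranclpE)
  then have "z \<in> nbrs mu x" "mu x z > 0" by (auto simp: nbrs_def adj_def)
  then show ?thesis unfolding vmeas_def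
    by (intro sum_pos2[OF finite_nbrs]) (auto simp: mu_nonneg)
qed

lemma trans_prob_nonneg: "trans_prob mu x y \<ge> 0"
  unfolding trans_prob_def by (intro divide_nonneg_pos mu_nonneg vmeas_pos)

lemma trans_prob_pos: "adj mu x y \<Longrightarrow> trans_prob mu x y > 0"
  using vmeas_pos[of x] by (simp add: trans_prob_def adj_def)

lemma sum_trans_prob: "(\<Sum>z\<in>nbrs mu x. trans_prob mu x z) = 1"
  using vmeas_pos[of x] unfolding trans_prob_def vmeas_def
  by (simp add: sum_divide_distrib[symmetric])

lemma walk_op_mono: "(\<And>y. f y \<le> g y) \<Longrightarrow> walk_op mu f x \<le> walk_op mu g x"
  unfolding walk_op_def by (intro sum_mono mult_left_mono) (auto simp: trans_prob_nonneg)

lemma walk_op_const: "walk_op mu (\<lambda>_. c) x = c"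
  unfolding walk_op_def by (simp add: sum_distrib_right[symmetric] sum_trans_prob)

lemma walk_op_linear:
  "walk_op mu (\<lambda>y. a * f y + b * g y) x = a * walk_op mu f x + b * walk_op mu g x"
  unfolding walk_op_def by (simp add: algebra_simps sum.distrib sum_distrib_left)

lemma walk_op_min_le:
  "walk_op mu (\<lambda>y. min (f y) (g y)) x \<le> min (walk_op mu f x) (walk_op mu g x)"
  by (simp add: walk_op_mono)

lemma laplacian_eq_walk_op: "laplacian mu u x = walk_op mu u x - u x"
proof -
  have "laplacian mu u x
      = (1 / vmeas mu x) * ((\<Sum>y\<in>nbrs mu x. mu x y * u y) - vmeas mu x * u x)"
    unfolding laplacian_def vmeas_def
    by (simp add: algebra_simps sum_subtractf sum_distrib_left sum_distrib_right)
  also have "\<dots> = walk_op mu u x - u x"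
    using vmeas_pos[of x] unfolding walk_op_def trans_prob_def
    by (simp add: field_simps sum_divide_distrib)
  finally show ?thesis .
qed

lemma finite_walk_reach: "finite (walk_reach mu n x)"
  by (induction n arbitrary: x) (auto simp: finite_nbrs)

lemma nstep_nonneg: "nstep mu n x y \<ge> 0"
  by (induction n arbitrary: x) (auto intro!: sum_nonneg mult_nonneg_nonneg trans_prob_nonneg)

lemma nstep_eq_0_outside_reach: "y \<notin> walk_reach mu n x \<Longrightarrow> nstep mu n x y = 0"
  by (induction n arbitrary: x) auto

lemma walk_iter_eq_sum:
  "(walk_op mu ^^ n) f x = (\<Sum>y\<in>walk_reach mu n x. nstep mu n x y * f y)"
proof (induction n arbitrary: x)
  case 0
  then show ?case by simp
next
  case (Suc n)
  have reach_Suc: "(\<Sum>y\<in>walk_reach mu n z. nstep mu n z y * f y)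
      = (\<Sum>y\<in>walk_reach mu (Suc n) x. nstep mu n z y * f y)" if "z \<in> nbrs mu x" for z
    by (rule sum.mono_neutral_left)
      (use that finite_nbrs finite_walk_reach nstep_eq_0_outside_reach in auto)
  have "(walk_op mu ^^ Suc n) f x
      = (\<Sum>z\<in>nbrs mu x. trans_prob mu x z * (\<Sum>y\<in>walk_reach mu n z. nstep mu n z y * f y))"
    by (simp add: walk_op_def Suc)
  also have "\<dots> = (\<Sum>z\<in>nbrs mu x. trans_prob mu x z
                     * (\<Sum>y\<in>walk_reach mu (Suc n) x. nstep mu n z y * f y))"
    by (simp add: reach_Suc)
  also have "\<dots> = (\<Sum>y\<in>walk_reach mu (Suc n) x.
                     (\<Sum>z\<in>nbrs mu x. trans_prob mu x z * nstep mu n z y) * f y)"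
    by (simp add: sum_distrib_left sum_distrib_right mult.assoc sum.swap[of _ "nbrs mu x"])
  finally show ?case by simp
qed

lemma walk_iter_eq_sum_superset:
  assumes "finite S" "walk_reach mu n x \<subseteq> S"
  shows "(walk_op mu ^^ n) f x = (\<Sum>y\<in>S. nstep mu n x y * f y)"
  unfolding walk_iter_eq_sum
  by (rule sum.mono_neutral_left) (use assms nstep_eq_0_outside_reach in auto)

lemma sum_nstep_le_walk_iter:
  assumes "finite F" "\<And>y. f y \<ge> 0"
  shows "(\<Sum>y\<in>F. nstep mu n x y * f y) \<le> (walk_op mu ^^ n) f x"
proof -
  have "(\<Sum>y\<in>F. nstep mu n x y * f y) \<le> (\<Sum>y\<in>F \<union> walk_reach mu n x. nstep mu n x y * f y)"
    by (rule sum_mono2) (auto simp: assms finite_walk_reach nstep_nonneg)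
  also have "\<dots> = (walk_op mu ^^ n) f x"
    by (rule walk_iter_eq_sum_superset[symmetric]) (auto simp: assms finite_walk_reach)
  finally show ?thesis .
qed

lemma walk_iter_mono: "(\<And>y. f y \<le> g y) \<Longrightarrow> (walk_op mu ^^ n) f x \<le> (walk_op mu ^^ n) g x"
  unfolding walk_iter_eq_sum by (intro sum_mono mult_left_mono) (auto simp: nstep_nonneg)

lemma walk_iter_linear:
  "(walk_op mu ^^ n) (\<lambda>y. a * f y + b * g y) x
     = a * (walk_op mu ^^ n) f x + b * (walk_op mu ^^ n) g x"
  unfolding walk_iter_eq_sum by (simp add: algebra_simps sum.distrib sum_distrib_left)

lemma walk_iter_scale: "(walk_op mu ^^ n) (\<lambda>y. c * f y) x = c * (walk_op mu ^^ n) f x"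
  using walk_iter_linear[of n c f 0 f x] by simp

lemma walk_iter_nonneg: "(\<And>y. f y \<ge> 0) \<Longrightarrow> (walk_op mu ^^ n) f x \<ge> 0"
  unfolding walk_iter_eq_sum by (intro sum_nonneg mult_nonneg_nonneg nstep_nonneg) auto

lemma walk_iter_nstep: "(walk_op mu ^^ m) (\<lambda>z. nstep mu n z y) x = nstep mu (m + n) x y"
  by (induction m arbitrary: x) (simp_all add: walk_op_def)

lemma nstep_add: "nstep mu (m + n) x y = (\<Sum>z\<in>walk_reach mu m x. nstep mu m x z * nstep mu n z y)"
  using walk_iter_nstep walk_iter_eq_sum by metis

lemma nstep_one: "nstep mu (Suc 0) x y = trans_prob mu x y"
proof (cases "y \<in> nbrs mu x")
  case True
  then show ?thesis by (simp add: finite_nbrs if_distrib cong: if_cong)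
next
  case False
  then show ?thesis by (auto simp: trans_prob_def mu_eq_0_outside_nbrs intro!: sum.neutral)
qed

lemma nstep_Suc_last:
  "nstep mu (Suc n) x y = (\<Sum>z\<in>walk_reach mu n x. nstep mu n x z * trans_prob mu z y)"
  using nstep_add[of n "Suc 0" x y] by (simp only: nstep_one add_Suc_right add_0_right)

lemma nstep_mult_le: "nstep mu m x z * nstep mu n z y \<le> nstep mu (m + n) x y"
proof (cases "z \<in> walk_reach mu m x")
  case True
  then show ?thesis unfolding nstep_add
    by (intro member_le_sum) (auto simp: finite_walk_reach nstep_nonneg)
next
  case False
  then show ?thesis by (simp add: nstep_eq_0_outside_reach nstep_nonneg)
qed

lemma nstep_reversible: "vmeas mu x * nstep mu n x y = vmeas mu y * nstep mu n y x"
proof (induction n arbitrary: x y)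
  case 0
  then show ?case by simp
next
  case (Suc n)
  let ?U = "nbrs mu x \<union> walk_reach mu n y"
  have finU: "finite ?U" by (simp add: finite_nbrs finite_walk_reach)
  have outside: "nstep mu n z y = 0" if "z \<notin> walk_reach mu n y" for z
    using Suc[of z y] nstep_eq_0_outside_reach[OF that] vmeas_pos[of z] by simp
  have "vmeas mu x * nstep mu (Suc n) x y = (\<Sum>z\<in>nbrs mu x. mu x z * nstep mu n z y)"
    using vmeas_pos[of x] by (simp add: sum_distrib_left trans_prob_def)
  also have "\<dots> = (\<Sum>z\<in>?U. mu x z * nstep mu n z y)"
    by (rule sum.mono_neutral_left) (auto simp: finU mu_eq_0_outside_nbrs finite_nbrs finite_walk_reach)
  also have "\<dots> = (\<Sum>z\<in>walk_reach mu n y. mu x z * nstep mu n z y)"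
    by (rule sum.mono_neutral_right) (auto simp: finU outside finite_nbrs finite_walk_reach)
  also have "\<dots> = (\<Sum>z\<in>walk_reach mu n y. vmeas mu y * (nstep mu n y z * trans_prob mu z x))"
  proof (rule sum.cong[OF refl])
    fix z
    show "mu x z * nstep mu n z y = vmeas mu y * (nstep mu n y z * trans_prob mu z x)"
      using Suc.IH[of y z] vmeas_pos[of z] by (simp add: trans_prob_def field_simps mu_sym)
  qed
  also have "\<dots> = vmeas mu y * nstep mu (Suc n) y x"
    by (simp add: nstep_Suc_last[of n y x] sum_distrib_left del: nstep.simps)
  finally show ?case .
qed

lemma nstep_pos_if_path: "(adj mu)\<^sup>*\<^sup>* x y \<Longrightarrow> \<exists>n. nstep mu n x y > 0"
proof (induction rule: converse_rtranclp_induct)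
  case base
  then show ?case by (intro exI[of _ 0]) simp
next
  case (step x z)
  then obtain n where n: "nstep mu n z y > 0" by blast
  have "z \<in> nbrs mu x" using step(1) by (simp add: nbrs_def)
  then have "trans_prob mu x z * nstep mu n z y \<le> nstep mu (Suc n) x y"
    by (simp only: nstep.simps, intro member_le_sum)
      (auto simp: finite_nbrs trans_prob_nonneg nstep_nonneg)
  moreover have "trans_prob mu x z * nstep mu n z y > 0"
    using trans_prob_pos[OF step(1)] n by simp
  ultimately show ?case by (intro exI[of _ "Suc n"]) linarith
qed

lemma nstep_pos: "\<exists>n. nstep mu n x y > 0"
  using nstep_pos_if_path connected by (simp add: connected_graph_def)

lemma walk_iter_diff:
  "(walk_op mu ^^ n) (\<lambda>y. f y - g y) x = (walk_op mu ^^ n) f x - (walk_op mu ^^ n) g x"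
  unfolding walk_iter_eq_sum by (simp add: algebra_simps sum_subtractf)

lemma walk_iter_telescope:
  "(\<Sum>k<n. (walk_op mu ^^ k) (\<lambda>y. \<psi> y - walk_op mu \<psi> y) x) + (walk_op mu ^^ n) \<psi> x = \<psi> x"
proof (induction n)
  case 0
  then show ?case by simp
next
  case (Suc n)
  then show ?case by (simp add: walk_iter_diff funpow_swap1)
qed

lemma sum_walk_iter_le_supersolution:
  assumes super: "\<And>x. walk_op mu \<psi> x + f x \<le> \<psi> x" and nonneg: "\<And>x. \<psi> x \<ge> 0"
  shows "(\<Sum>k<n. (walk_op mu ^^ k) f x) \<le> \<psi> x"
proof -
  have "(\<Sum>k<n. (walk_op mu ^^ k) f x)
      \<le> (\<Sum>k<n. (walk_op mu ^^ k) (\<lambda>y. \<psi> y - walk_op mu \<psi> y) x)"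
    by (intro sum_mono walk_iter_mono) (metis add.commute le_diff_eq super)
  also have "\<dots> = \<psi> x - (walk_op mu ^^ n) \<psi> x"
    using walk_iter_telescope[where \<psi> = \<psi> and n = n and x = x] by simp
  also have "\<dots> \<le> \<psi> x"
    using walk_iter_nonneg[of \<psi>] nonneg by simp
  finally show ?thesis .
qed

lemma sum_nstep_le_supersolution:
  assumes "\<And>x. walk_op mu \<psi> x + f x \<le> \<psi> x" "\<And>x. \<psi> x \<ge> 0" "\<And>y. f y \<ge> 0" "finite S"
  shows "(\<Sum>k<n. \<Sum>y\<in>S. nstep mu k x y * f y) \<le> \<psi> x"
proof -
  have "(\<Sum>k<n. \<Sum>y\<in>S. nstep mu k x y * f y) \<le> (\<Sum>k<n. (walk_op mu ^^ k) f x)"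
    using assms(3,4) by (intro sum_mono sum_nstep_le_walk_iter)
  also have "\<dots> \<le> \<psi> x"
    using assms(1,2) by (rule sum_walk_iter_le_supersolution)
  finally show ?thesis .
qed

lemma sum_walk_iter_reversible:
  assumes "finite Y" "finite S" "\<And>y. y \<in> Y \<Longrightarrow> walk_reach mu k y \<subseteq> S"
  shows "(\<Sum>y\<in>Y. (walk_op mu ^^ k) f y * (g y * vmeas mu y))
       = (\<Sum>x\<in>S. f x * vmeas mu x * (\<Sum>y\<in>Y. nstep mu k x y * g y))"
proof -
  have "(\<Sum>y\<in>Y. (walk_op mu ^^ k) f y * (g y * vmeas mu y))
      = (\<Sum>y\<in>Y. \<Sum>x\<in>S. (vmeas mu y * nstep mu k y x) * f x * g y)"
    using assms
    by (intro sum.cong refl)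
      (simp add: walk_iter_eq_sum_superset sum_distrib_left sum_distrib_right algebra_simps)
  also have "\<dots> = (\<Sum>x\<in>S. \<Sum>y\<in>Y. (vmeas mu x * nstep mu k x y) * f x * g y)"
    by (subst sum.swap) (simp add: nstep_reversible)
  also have "\<dots> = (\<Sum>x\<in>S. f x * vmeas mu x * (\<Sum>y\<in>Y. nstep mu k x y * g y))"
    by (simp add: sum_distrib_left algebra_simps)
  finally show ?thesis .
qed

text \<open>
  Since \<open>power_profile q a\<close> is concave with derivative \<open>s^-q\<close>, the function \<open>H \<Phi>(u/H)\<close>
  lies below the function of \<open>(H, u)\<close> that is linear with its slopes at x; the walk operator
  preserves this, and the supersolution inequalities for H and u then give the claim.
\<close>

lemma supersolution_transform:
  fixes H u \<sigma> :: "'a \<Rightarrow> real" and q c :: real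
  assumes q: "q > 1" and c: "c > 0"
    and H_pos: "\<And>x. H x > 0" and H_super: "\<And>x. walk_op mu H x \<le> H x"
    and u_ge: "\<And>x. c * H x \<le> u x"
    and sol: "\<And>x. walk_op mu u x + \<sigma> x * u x powr q \<le> u x"
  defines "\<Phi> \<equiv> power_profile q (q * c powr (1 - q))"
  shows "walk_op mu (\<lambda>z. H z * \<Phi> (u z / H z)) x + \<sigma> x * H x powr q \<le> H x * \<Phi> (u x / H x)"
proof -
  have ratio_ge: "c \<le> u z / H z" for z
    using u_ge[of z] H_pos[of z] by (simp add: field_simps)
  define v where "v = u x / H x"
  have v: "v > 0" using ratio_ge[of x] c by (simp add: v_def)
  have v_powr: "v powr (- q) * v = v powr (1 - q)" "v powr (- q) * v powr q = 1"
    using v powr_mult_base[of v "- q"] by (simp_all add: powr_add[symmetric] mult.commute)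
  have slope: "\<Phi> v - v powr (1 - q) \<ge> 0"
    using powr_le_power_profile[OF q c ratio_ge[of x]] by (simp add: \<Phi>_def v_def)
  have tangent: "H z * \<Phi> (u z / H z) \<le> (\<Phi> v - v powr (1 - q)) * H z + v powr (- q) * u z" for z
  proof -
    have "\<Phi> (u z / H z) \<le> \<Phi> v + v powr (- q) * (u z / H z - v)"
      unfolding \<Phi>_def using ratio_ge[of z] c by (intro power_profile_tangent[OF q _ v]) auto
    then have "H z * \<Phi> (u z / H z) \<le> H z * (\<Phi> v + v powr (- q) * (u z / H z - v))"
      using H_pos[of z] by (intro mult_left_mono) auto
    also have "\<dots> = (\<Phi> v - v powr (1 - q)) * H z + v powr (- q) * u z"
      using H_pos[of z] v_powr(1) by (simp add: field_simps)
    finally show ?thesis .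
  qed
  have "walk_op mu (\<lambda>z. H z * \<Phi> (u z / H z)) x
      \<le> (\<Phi> v - v powr (1 - q)) * walk_op mu H x + v powr (- q) * walk_op mu u x"
    using walk_op_mono[OF tangent] by (simp add: walk_op_linear)
  also have "\<dots> \<le> (\<Phi> v - v powr (1 - q)) * H x + v powr (- q) * (u x - \<sigma> x * u x powr q)"
    using slope H_super[of x] sol[of x] by (intro add_mono mult_left_mono) auto
  also have "\<dots> = H x * \<Phi> v - \<sigma> x * H x powr q"
  proof -
    have u_eq: "u x = v * H x" and u_powr: "u x powr q = v powr q * H x powr q"
      using H_pos[of x] v by (simp_all add: v_def powr_mult[symmetric])
    have "v powr (- q) * u x = v powr (1 - q) * H x"
      using v_powr(1) by (simp add: u_eq mult.assoc[symmetric])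
    moreover have "v powr (- q) * u x powr q = H x powr q"
      using v_powr(2) by (simp add: u_powr mult.assoc[symmetric] mult.commute)
    ultimately have "v powr (- q) * (u x - \<sigma> x * u x powr q) = v powr (1 - q) * H x - \<sigma> x * H x powr q"
      by (simp add: algebra_simps)
    then show ?thesis by (simp add: algebra_simps)
  qed
  finally show ?thesis by (simp add: v_def)
qed

lemma sum_walk_iter_source_le:
  fixes H u \<sigma> :: "'a \<Rightarrow> real" and q c :: real
  assumes q: "q > 1" and c: "c > 0"
    and H_pos: "\<And>x. H x > 0" and H_super: "\<And>x. walk_op mu H x \<le> H x"
    and u_ge: "\<And>x. c * H x \<le> u x"
    and sol: "\<And>x. walk_op mu u x + \<sigma> x * u x powr q \<le> u x"
  shows "(\<Sum>k<n. (walk_op mu ^^ k) (\<lambda>y. \<sigma> y * H y powr q) x)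
           \<le> q * c powr (1 - q) / (q - 1) * H x"
proof -
  have ratio_ge: "c \<le> u z / H z" for z
    using u_ge[of z] H_pos[of z] by (simp add: field_simps)
  have profile_nonneg: "power_profile q (q * c powr (1 - q)) (u z / H z) \<ge> 0" for z
    using powr_le_power_profile[OF q c ratio_ge[of z]] powr_ge_zero[of "u z / H z" "1 - q"]
    by linarith
  have "(\<Sum>k<n. (walk_op mu ^^ k) (\<lambda>y. \<sigma> y * H y powr q) x)
      \<le> H x * power_profile q (q * c powr (1 - q)) (u x / H x)"
    using H_pos profile_nonneg
    by (intro sum_walk_iter_le_supersolution[OF supersolution_transform[OF q c H_pos H_super u_ge sol]])
      (simp add: less_imp_le)
  also have "\<dots> \<le> H x * (q * c powr (1 - q) / (q - 1))"
    using H_pos[of x] q by (intro mult_left_mono) (auto simp: power_profile_def divide_right_mono)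
  finally show ?thesis
    by (simp add: mult.commute)
qed

text \<open>
  If the potential F of \<open>\<sigma> h^q\<close> is at most K h, then \<open>l h + (2l)^q F\<close> lies between
  \<open>l h\<close> and \<open>2 l h\<close> once \<open>(2l)^q K = l\<close>, and is then a supersolution.
\<close>

lemma pos_solution_of_potential_le:
  fixes h F \<sigma> :: "'a \<Rightarrow> real"
  assumes q: "q > 1" and \<sigma>_nonneg: "\<And>x. \<sigma> x \<ge> 0"
    and h_pos: "\<And>x. h x > 0" and h_super: "\<And>x. walk_op mu h x \<le> h x"
    and F_nonneg: "\<And>x. F x \<ge> 0" and F_eq: "\<And>x. walk_op mu F x + \<sigma> x * h x powr q = F x"
    and K: "K > 0" and F_le: "\<And>x. F x \<le> K * h x"
  shows "has_pos_solution mu \<sigma> q"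
proof -
  obtain l where l: "l > 0" and l_eq: "(2 * l) powr q * K = l"
    using exists_powr_scale_fixpoint[OF K q] by blast
  define w where "w = (\<lambda>x. l * h x + (2 * l) powr q * F x)"
  have lq: "(2 * l) powr q > 0" using l by simp
  have w_pos: "w x > 0" for x
    using l h_pos[of x] F_nonneg[of x] lq by (simp add: w_def add_pos_nonneg)
  have w_le: "w x \<le> 2 * l * h x" for x
  proof -
    have "(2 * l) powr q * F x \<le> (2 * l) powr q * (K * h x)"
      using F_le[of x] lq by (intro mult_left_mono) auto
    also have "\<dots> = l * h x"
      using l_eq by (simp add: mult.assoc[symmetric])
    finally show ?thesis by (simp add: w_def)
  qed
  have "- laplacian mu w x \<ge> \<sigma> x * w x powr q" for x
  proof -
    have "walk_op mu w x = l * walk_op mu h x + (2 * l) powr q * walk_op mu F x"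
      unfolding w_def by (rule walk_op_linear)
    also have "\<dots> \<le> l * h x + (2 * l) powr q * (F x - \<sigma> x * h x powr q)"
      using h_super[of x] l F_eq[of x] by (intro add_mono mult_left_mono) (auto simp: algebra_simps)
    finally have "w x - walk_op mu w x \<ge> (2 * l) powr q * (\<sigma> x * h x powr q)"
      by (simp add: w_def algebra_simps)
    moreover have "w x powr q \<le> (2 * l * h x) powr q"
      using w_pos[of x] w_le[of x] q by (intro powr_mono2) auto
    then have "w x powr q \<le> (2 * l) powr q * h x powr q"
      using l h_pos[of x] by (simp add: powr_mult)
    then have "\<sigma> x * w x powr q \<le> (2 * l) powr q * (\<sigma> x * h x powr q)"
      using \<sigma>_nonneg[of x] by (simp add: mult_left_mono mult.left_commute)
    ultimately show ?thesis
      by (simp add: laplacian_eq_walk_op)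
  qed
  then show ?thesis
    unfolding has_pos_solution_def using w_pos by blast
qed

end

locale transient_graph = connected_weighted_graph +
  assumes non_parabolic: "non_parabolic mu"
begin

lemma exists_strict_superharmonic:
  obtains w x0 where "\<And>x. w x \<ge> 0" "\<And>x. walk_op mu w x \<le> w x" "walk_op mu w x0 < w x0"
proof -
  obtain u where u_nonneg: "\<And>x. u x \<ge> 0" and u_super: "\<And>x. walk_op mu u x \<le> u x"
    and nonconst: "\<not> (\<exists>c. \<forall>x. u x = c)"
    using non_parabolic unfolding non_parabolic_def laplacian_eq_walk_op by auto
  obtain a b where less: "u a < u b"
    using nonconst by (metis linorder_neqE_linordered_idom)
  have "(adj mu)\<^sup>*\<^sup>* b a"
    using connected by (simp add: connected_graph_def)
  then obtain x0 y0 where edge: "adj mu x0 y0" "u x0 \<ge> u b" "\<not> u y0 \<ge> u b"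
    using rtranclp_crossing_edge[of "adj mu" b a "\<lambda>x. u x \<ge> u b"] less by auto
  \<comment> \<open>Truncating u at a level crossed by an edge makes it strictly superharmonic at that edge.\<close>
  define w where "w = (\<lambda>z. min (u z) (u b))"
  have w_nonneg: "w x \<ge> 0" for x
    using u_nonneg by (simp add: w_def)
  have w_super: "walk_op mu w x \<le> w x" for x
    using walk_op_min_le[of u "\<lambda>_. u b" x] u_super[of x] by (simp add: w_def walk_op_const)
  have "walk_op mu w x0 < walk_op mu (\<lambda>_. u b) x0"
    unfolding walk_op_def
  proof (rule sum_strict_mono_ex1[OF finite_nbrs])
    show "\<forall>z\<in>nbrs mu x0. trans_prob mu x0 z * w z \<le> trans_prob mu x0 z * u b"
      by (auto intro!: mult_left_mono simp: trans_prob_nonneg w_def)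
    show "\<exists>z\<in>nbrs mu x0. trans_prob mu x0 z * w z < trans_prob mu x0 z * u b"
      using edge trans_prob_pos[OF edge(1)] by (intro bexI[of _ y0]) (auto simp: w_def nbrs_def)
  qed
  then have "walk_op mu w x0 < w x0"
    using edge(2) by (simp add: walk_op_const w_def)
  with w_nonneg w_super show ?thesis
    by (rule that)
qed

lemma summable_nstep: "summable (\<lambda>n. nstep mu n x y)"
proof -
  obtain w x0 where w_nonneg: "\<And>x. w x \<ge> 0" and w_super: "\<And>x. walk_op mu w x \<le> w x"
    and strict: "walk_op mu w x0 < w x0"
    using exists_strict_superharmonic by blast
  define f where "f = (\<lambda>z. w z - walk_op mu w z)"
  have f_pos: "f x0 > 0" using strict by (simp add: f_def)
  have summable_x0: "summable (\<lambda>n. nstep mu n z x0)" for z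
  proof (rule summableI_nonneg_bounded[where x = "w z / f x0"])
    fix n
    have "(\<Sum>k<n. nstep mu k z x0) * f x0 \<le> w z"
      using sum_nstep_le_supersolution[where \<psi> = w and f = f and S = "{x0}" and n = n and x = z] w_nonneg w_super
      by (simp add: f_def sum_distrib_right)
    then show "(\<Sum>k<n. nstep mu k z x0) \<le> w z / f x0"
      using f_pos by (simp add: field_simps)
  qed (rule nstep_nonneg)
  obtain m where m: "nstep mu m y x0 > 0" using nstep_pos by blast
  show ?thesis
  proof (rule summable_comparison_test'[where N = 0])
    show "summable (\<lambda>n. nstep mu (n + m) x x0 / nstep mu m y x0)"
      using summable_x0[of x] summable_iff_shift[where f = "\<lambda>n. nstep mu n x x0" and k = m]
      by (intro summable_divide) simp
    show "norm (nstep mu n x y) \<le> nstep mu (n + m) x x0 / nstep mu m y x0" for n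
      using nstep_mult_le[of n x y m x0] m by (simp add: nstep_nonneg field_simps)
  qed
qed

lemma sum_visits_eq_suminf:
  assumes "finite S"
  shows "(\<Sum>y\<in>S. visits mu x y * f y) = (\<Sum>k. \<Sum>y\<in>S. nstep mu k x y * f y)"
    and "summable (\<lambda>k. \<Sum>y\<in>S. nstep mu k x y * f y)"
proof -
  show "summable (\<lambda>k. \<Sum>y\<in>S. nstep mu k x y * f y)"
    by (intro summable_sum summable_mult2 summable_nstep)
  have "(\<Sum>y\<in>S. visits mu x y * f y) = (\<Sum>y\<in>S. \<Sum>k. nstep mu k x y * f y)"
    unfolding visits_def by (intro sum.cong refl suminf_mult2 summable_nstep)
  also have "\<dots> = (\<Sum>k. \<Sum>y\<in>S. nstep mu k x y * f y)"
    by (rule suminf_sum[symmetric]) (intro summable_mult2 summable_nstep)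
  finally show "(\<Sum>y\<in>S. visits mu x y * f y) = (\<Sum>k. \<Sum>y\<in>S. nstep mu k x y * f y)" .
qed

lemma sum_visits_le_supersolution:
  assumes "\<And>x. walk_op mu \<psi> x + f x \<le> \<psi> x" "\<And>x. \<psi> x \<ge> 0" "\<And>y. f y \<ge> 0" "finite S"
  shows "(\<Sum>y\<in>S. visits mu x y * f y) \<le> \<psi> x"
  unfolding sum_visits_eq_suminf(1)[OF assms(4)]
  by (intro suminf_le_const sum_visits_eq_suminf(2) assms(4) sum_nstep_le_supersolution assms)

lemma visits_nonneg: "visits mu x y \<ge> 0"
  unfolding visits_def by (intro suminf_nonneg summable_nstep nstep_nonneg)

lemma visits_pos: "visits mu x y > 0"
proof -
  obtain n where "nstep mu n x y > 0" using nstep_pos by blast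
  then show ?thesis
    unfolding visits_def using suminf_pos_iff[OF summable_nstep nstep_nonneg] by blast
qed

lemma green_eq_visits: "green mu x y = visits mu x y / vmeas mu y"
  by (simp add: green_def visits_def)

lemma green_pos: "green mu x y > 0"
  using visits_pos vmeas_pos by (simp add: green_eq_visits)

lemma visits_reversible: "vmeas mu x * visits mu x y = vmeas mu y * visits mu y x"
  unfolding visits_def
  by (simp add: suminf_mult[symmetric] summable_nstep nstep_reversible)

lemma green_mult_vmeas: "green mu x y * vmeas mu y = visits mu x y"
  using vmeas_pos[of y] by (simp add: green_eq_visits)

lemma green_sym: "green mu x y = green mu y x"
  using visits_reversible[of x y] vmeas_pos[of x] vmeas_pos[of y]
  by (simp add: green_eq_visits field_simps)

lemma walk_op_visits:
  "walk_op mu (\<lambda>z. visits mu z y) x = visits mu x y - (if x = y then 1 else 0)"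
proof -
  have "walk_op mu (\<lambda>z. visits mu z y) x
      = (\<Sum>z\<in>nbrs mu x. \<Sum>n. trans_prob mu x z * nstep mu n z y)"
    unfolding walk_op_def visits_def by (simp add: suminf_mult summable_nstep)
  also have "\<dots> = (\<Sum>n. nstep mu (Suc n) x y)"
    by (subst suminf_sum[symmetric]) (simp_all add: summable_mult summable_nstep)
  also have "\<dots> = visits mu x y - nstep mu 0 x y"
    unfolding visits_def by (rule suminf_split_head[OF summable_nstep])
  finally show ?thesis by simp
qed

lemma walk_op_green_le: "walk_op mu (\<lambda>z. green mu z p) x \<le> green mu x p"
proof -
  have "walk_op mu (\<lambda>z. green mu z p) x = walk_op mu (\<lambda>z. visits mu z p) x / vmeas mu p"
    by (simp add: walk_op_def green_eq_visits sum_divide_distrib)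
  then show ?thesis
    using vmeas_pos[of p] by (simp add: walk_op_visits green_eq_visits divide_right_mono)
qed

lemma walk_iter_visits_tendsto_0: "(\<lambda>n. (walk_op mu ^^ n) (\<lambda>z. visits mu z y) x) \<longlonglongrightarrow> 0"
proof -
  have delta: "(walk_op mu ^^ k) (\<lambda>z. if z = y then 1 else 0) x = nstep mu k x y" for k
    using walk_iter_nstep[of k 0 y x] by simp
  have "(walk_op mu ^^ n) (\<lambda>z. visits mu z y) x = visits mu x y - (\<Sum>k<n. nstep mu k x y)" for n
    using walk_iter_telescope[where \<psi> = "\<lambda>z. visits mu z y" and n = n and x = x] by (simp add: walk_op_visits delta)
  moreover have "(\<lambda>n. visits mu x y - (\<Sum>k<n. nstep mu k x y)) \<longlonglongrightarrow> visits mu x y - visits mu x y"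
    unfolding visits_def by (intro tendsto_diff tendsto_const summable_LIMSEQ summable_nstep)
  ultimately show ?thesis by simp
qed

lemma visits_le_diag: "visits mu x p \<le> visits mu p p"
proof -
  define \<psi> where "\<psi> = (\<lambda>z. min (visits mu z p) (visits mu p p))"
  define f :: "'a \<Rightarrow> real" where "f = (\<lambda>z. if z = p then 1 else 0)"
  have "walk_op mu \<psi> z + f z \<le> \<psi> z" for z
    using walk_op_min_le[of "\<lambda>z. visits mu z p" "\<lambda>_. visits mu p p" z]
    by (cases "z = p") (simp_all add: \<psi>_def f_def walk_op_visits walk_op_const)
  then have "(\<Sum>y\<in>{p}. visits mu x y * f y) \<le> \<psi> x"
    by (rule sum_visits_le_supersolution) (auto simp: \<psi>_def f_def visits_nonneg)
  then show ?thesis by (simp add: \<psi>_def f_def)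
qed

lemma green_le_diag: "green mu x p \<le> green mu p p"
  using visits_le_diag[of x p] vmeas_pos[of p] by (simp add: green_eq_visits divide_right_mono)

lemma walk_op_potential:
  assumes summable: "\<And>x. (\<lambda>y. visits mu x y * f y) summable_on UNIV"
  shows "walk_op mu (\<lambda>x. \<Sum>\<^sub>\<infinity>y. visits mu x y * f y) x + f x = (\<Sum>\<^sub>\<infinity>y. visits mu x y * f y)"
proof -
  have nbrs_part: "((\<lambda>y. \<Sum>z\<in>nbrs mu x. trans_prob mu x z * (visits mu z y * f y))
      has_sum walk_op mu (\<lambda>x. \<Sum>\<^sub>\<infinity>y. visits mu x y * f y) x) UNIV"
    unfolding walk_op_def using summable
    by (intro has_sum_finite_sum finite_nbrs has_sum_cmult_right has_sum_infsum)
  have diag_part: "((\<lambda>y. if y = x then f x else 0) has_sum f x) UNIV"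
  proof (rule has_sum_cong_neutral[where T = "{x}" and g = "\<lambda>_. f x", THEN iffD2])
    show "((\<lambda>_. f x) has_sum f x) {x}"
      using has_sum_finite[of "{x}" "\<lambda>_. f x"] by simp
  qed auto
  have "visits mu x y * f y
      = (\<Sum>z\<in>nbrs mu x. trans_prob mu x z * (visits mu z y * f y)) + (if y = x then f x else 0)" for y
  proof -
    have "(\<Sum>z\<in>nbrs mu x. trans_prob mu x z * (visits mu z y * f y))
        = walk_op mu (\<lambda>z. visits mu z y) x * f y"
      by (simp add: walk_op_def sum_distrib_right mult.assoc)
    then show ?thesis
      by (cases "x = y") (simp_all add: walk_op_visits algebra_simps)
  qed
  then have "((\<lambda>y. visits mu x y * f y)
      has_sum (walk_op mu (\<lambda>x. \<Sum>\<^sub>\<infinity>y. visits mu x y * f y) x + f x)) UNIV"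
    using has_sum_add[OF nbrs_part diag_part] by simp
  then show ?thesis
    by (simp add: infsumI)
qed

lemma supersolution_ge_green:
  assumes "\<And>x. walk_op mu u x + f x \<le> u x" "\<And>x. u x \<ge> 0" "\<And>x. f x \<ge> 0"
  shows "vmeas mu p * f p * green mu x p \<le> u x"
proof -
  have "(\<Sum>y\<in>{p}. visits mu x y * f y) \<le> u x"
    using assms by (intro sum_visits_le_supersolution) auto
  then show ?thesis
    using green_mult_vmeas[of x p] by (simp add: mult_ac)
qed

lemma sum_green_le_of_walk_iter_le:
  assumes g_nonneg: "\<And>y. g y \<ge> 0" and bound: "\<And>n. (\<Sum>k<n. (walk_op mu ^^ k) g x) \<le> B"
    and F: "finite F"
  shows "(\<Sum>y\<in>F. green mu x y * (g y * vmeas mu y)) \<le> B"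
proof -
  have "(\<Sum>y\<in>F. green mu x y * (g y * vmeas mu y)) = (\<Sum>y\<in>F. visits mu x y * g y)"
    by (intro sum.cong refl) (metis green_mult_vmeas mult.commute mult.left_commute)
  also have "\<dots> = (\<Sum>k. \<Sum>y\<in>F. nstep mu k x y * g y)"
    by (rule sum_visits_eq_suminf(1)[OF F])
  also have "\<dots> \<le> B"
  proof (rule suminf_le_const[OF sum_visits_eq_suminf(2)[OF F]])
    fix n
    have "(\<Sum>k<n. \<Sum>y\<in>F. nstep mu k x y * g y) \<le> (\<Sum>k<n. (walk_op mu ^^ k) g x)"
      using g_nonneg F by (intro sum_mono sum_nstep_le_walk_iter)
    then show "(\<Sum>k<n. \<Sum>y\<in>F. nstep mu k x y * g y) \<le> B"
      using bound[of n] by linarith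
  qed
  finally show ?thesis .
qed

lemma level_set_green_sum_le:
  assumes \<sigma>_nonneg: "\<And>y. \<sigma> y \<ge> 0" and r: "r > 0"
    and bound: "\<And>n. (\<Sum>k<n. (walk_op mu ^^ k) (\<lambda>y. \<sigma> y * min (green mu y p) (1 / r) powr q) x)
                     \<le> M / r"
  shows "(\<lambda>y. green mu x y * (\<sigma> y * vmeas mu y)) summable_on {y. green mu p y > 1 / r} \<and>
         (\<Sum>\<^sub>\<infinity>y\<in>{y. green mu p y > 1 / r}. green mu x y * (\<sigma> y * vmeas mu y))
           \<le> M * r powr (q - 1)"
proof (rule nonneg_summable_on_infsum_le)
  show "green mu x y * (\<sigma> y * vmeas mu y) \<ge> 0" for y
    using green_pos[of x y] \<sigma>_nonneg[of y] vmeas_pos[of y] by simp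
  fix F assume F: "finite F" "F \<subseteq> {y. green mu p y > 1 / r}"
  define g where "g = (\<lambda>y. r powr q * (\<sigma> y * min (green mu y p) (1 / r) powr q))"
  have "\<sigma> y = g y" if "y \<in> F" for y
  proof -
    have "min (green mu y p) (1 / r) = 1 / r"
      using F that by (auto simp: green_sym[of y p])
    then show ?thesis
      using r by (simp add: g_def powr_divide)
  qed
  then have "(\<Sum>y\<in>F. green mu x y * (\<sigma> y * vmeas mu y)) = (\<Sum>y\<in>F. green mu x y * (g y * vmeas mu y))"
    by simp
  also have "\<dots> \<le> r powr q * (M / r)"
  proof (rule sum_green_le_of_walk_iter_le[OF _ _ F(1)])
    show "g y \<ge> 0" for y
      using \<sigma>_nonneg[of y] by (simp add: g_def)
    show "(\<Sum>k<n. (walk_op mu ^^ k) g x) \<le> r powr q * (M / r)" for n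
      using mult_left_mono[OF bound[of n], of "r powr q"]
      by (simp add: g_def walk_iter_scale sum_distrib_left[symmetric])
  qed
  also have "r powr q * (M / r) = M * r powr (q - 1)"
    using r by (simp add: powr_diff)
  finally show "(\<Sum>y\<in>F. green mu x y * (\<sigma> y * vmeas mu y)) \<le> M * r powr (q - 1)" .
qed

lemma sum_walk_iter_excess_tendsto:
  assumes \<phi>_nonneg: "\<And>z. \<phi> z \<ge> 0" and \<phi>_le: "\<And>z. \<phi> z \<le> c * green mu z p"
  shows "(\<lambda>n. \<Sum>k<n. (walk_op mu ^^ k) (\<lambda>z. \<phi> z - walk_op mu \<phi> z) x) \<longlonglongrightarrow> \<phi> x"
proof -
  have "(\<lambda>n. (walk_op mu ^^ n) \<phi> x) \<longlonglongrightarrow> 0"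
  proof (rule tendsto_sandwich)
    show "\<forall>\<^sub>F n in sequentially. 0 \<le> (walk_op mu ^^ n) \<phi> x"
      using \<phi>_nonneg by (simp add: walk_iter_nonneg)
    have "\<phi> z \<le> c / vmeas mu p * visits mu z p" for z
      using \<phi>_le[of z] by (simp add: green_eq_visits)
    then show "\<forall>\<^sub>F n in sequentially.
        (walk_op mu ^^ n) \<phi> x \<le> c / vmeas mu p * (walk_op mu ^^ n) (\<lambda>z. visits mu z p) x"
      by (simp add: walk_iter_mono walk_iter_scale[symmetric])
    show "(\<lambda>n. c / vmeas mu p * (walk_op mu ^^ n) (\<lambda>z. visits mu z p) x) \<longlonglongrightarrow> 0"
      by (rule tendsto_mult_right_zero[OF walk_iter_visits_tendsto_0])
  qed simp
  then have "(\<lambda>n. \<phi> x - (walk_op mu ^^ n) \<phi> x) \<longlonglongrightarrow> \<phi> x - 0"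
    by (intro tendsto_diff tendsto_const)
  moreover have "\<phi> x - (walk_op mu ^^ n) \<phi> x
      = (\<Sum>k<n. (walk_op mu ^^ k) (\<lambda>z. \<phi> z - walk_op mu \<phi> z) x)" for n
    using walk_iter_telescope[where \<psi> = \<phi> and n = n and x = x] by simp
  ultimately show ?thesis by simp
qed

lemma sum_walk_iter_excess_weighted_le:
  assumes \<phi>_nonneg: "\<And>z. \<phi> z \<ge> 0" and \<phi>_super: "\<And>z. walk_op mu \<phi> z \<le> \<phi> z"
    and g_nonneg: "\<And>y. g y \<ge> 0" and M: "M \<ge> 0"
    and potential: "\<And>n x. (\<Sum>k<n. (walk_op mu ^^ k) g x) \<le> M * green mu x p"
    and Y: "finite Y"
  defines "f \<equiv> \<lambda>z. \<phi> z - walk_op mu \<phi> z"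
  shows "(\<Sum>y\<in>Y. (\<Sum>k<n. (walk_op mu ^^ k) f y) * (g y * vmeas mu y)) \<le> M * \<phi> p"
proof -
  define S where "S = (\<Union>y\<in>Y. \<Union>k<n. walk_reach mu k y)"
  have S: "finite S"
    using Y by (simp add: S_def finite_walk_reach)
  have f_nonneg: "f z \<ge> 0" for z
    using \<phi>_super[of z] by (simp add: f_def)
  have "(\<Sum>y\<in>Y. (\<Sum>k<n. (walk_op mu ^^ k) f y) * (g y * vmeas mu y))
      = (\<Sum>k<n. \<Sum>y\<in>Y. (walk_op mu ^^ k) f y * (g y * vmeas mu y))"
    by (simp add: sum_distrib_right sum.swap[of _ Y])
  also have "\<dots> = (\<Sum>k<n. \<Sum>x\<in>S. f x * vmeas mu x * (\<Sum>y\<in>Y. nstep mu k x y * g y))"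
    using Y S by (intro sum.cong refl sum_walk_iter_reversible) (auto simp: S_def)
  also have "\<dots> = (\<Sum>x\<in>S. f x * vmeas mu x * (\<Sum>k<n. \<Sum>y\<in>Y. nstep mu k x y * g y))"
    by (simp add: sum_distrib_left sum.swap[of _ S])
  also have "\<dots> \<le> (\<Sum>x\<in>S. f x * vmeas mu x * (M * green mu x p))"
  proof (rule sum_mono)
    fix x
    have "(\<Sum>k<n. \<Sum>y\<in>Y. nstep mu k x y * g y) \<le> (\<Sum>k<n. (walk_op mu ^^ k) g x)"
      using Y g_nonneg by (intro sum_mono sum_nstep_le_walk_iter)
    also have "\<dots> \<le> M * green mu x p"
      by (rule potential)
    finally show "f x * vmeas mu x * (\<Sum>k<n. \<Sum>y\<in>Y. nstep mu k x y * g y)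
        \<le> f x * vmeas mu x * (M * green mu x p)"
      using f_nonneg[of x] vmeas_pos[of x] by (intro mult_left_mono) auto
  qed
  also have "\<dots> = M * (\<Sum>x\<in>S. visits mu p x * f x)"
  proof -
    have "vmeas mu x * green mu x p = visits mu p x" for x
      using green_mult_vmeas[of p x] by (simp add: green_sym[of x p] mult.commute)
    then show ?thesis
      by (simp add: sum_distrib_left algebra_simps)
  qed
  also have "\<dots> \<le> M * \<phi> p"
    using M \<phi>_nonneg f_nonneg S
    by (intro mult_left_mono sum_visits_le_supersolution) (auto simp: f_def)
  finally show ?thesis .
qed

text \<open>
  Test against \<open>\<phi> = min 1 (g(\<cdot>,p)/t)\<close>, a potential equal to 1 on Y: by reversibility,
  the mass of g on Y is at most M times \<open>\<Sum>\<^sub>x visits(p,x) (\<phi> - P \<phi>)(x) \<le> \<phi> p \<le> 1\<close>.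
\<close>

lemma mass_le_of_potential_le_green:
  assumes g_nonneg: "\<And>y. g y \<ge> 0" and M: "M \<ge> 0"
    and potential: "\<And>n x. (\<Sum>k<n. (walk_op mu ^^ k) g x) \<le> M * green mu x p"
    and Y: "finite Y"
  shows "(\<Sum>y\<in>Y. g y * vmeas mu y) \<le> M"
proof (cases "Y = {}")
  case True
  then show ?thesis using M by simp
next
  case False
  define t where "t = Min ((\<lambda>y. green mu y p) ` Y)"
  have t: "t > 0"
    using Y False green_pos by (simp add: t_def)
  have t_le: "t \<le> green mu y p" if "y \<in> Y" for y
    using Y that by (simp add: t_def)
  define \<phi> where "\<phi> = (\<lambda>z. min 1 (green mu z p / t))"
  have \<phi>_nonneg: "\<phi> z \<ge> 0" for z
    using green_pos[of z p] t by (simp add: \<phi>_def)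
  have \<phi>_super: "walk_op mu \<phi> z \<le> \<phi> z" for z
  proof -
    have "walk_op mu (\<lambda>z. green mu z p / t) z = walk_op mu (\<lambda>z. green mu z p) z / t"
      by (simp add: walk_op_def sum_divide_distrib)
    then have "walk_op mu (\<lambda>z. green mu z p / t) z \<le> green mu z p / t"
      using walk_op_green_le[of p z] t by (simp add: divide_right_mono)
    then show ?thesis
      using walk_op_min_le[of "\<lambda>_. 1" "\<lambda>z. green mu z p / t" z] by (simp add: \<phi>_def walk_op_const)
  qed
  have \<phi>_Y: "\<phi> y = 1" if "y \<in> Y" for y
    using t_le[OF that] t by (simp add: \<phi>_def)
  have "(\<lambda>n. \<Sum>y\<in>Y. (\<Sum>k<n. (walk_op mu ^^ k) (\<lambda>z. \<phi> z - walk_op mu \<phi> z) y) * (g y * vmeas mu y))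
      \<longlonglongrightarrow> (\<Sum>y\<in>Y. \<phi> y * (g y * vmeas mu y))"
    using \<phi>_nonneg
    by (intro tendsto_sum tendsto_mult_right sum_walk_iter_excess_tendsto[where c = "1 / t" and p = p])
      (auto simp: \<phi>_def)
  moreover have "(\<Sum>y\<in>Y. (\<Sum>k<n. (walk_op mu ^^ k) (\<lambda>z. \<phi> z - walk_op mu \<phi> z) y) * (g y * vmeas mu y))
      \<le> M" for n
    using sum_walk_iter_excess_weighted_le[OF \<phi>_nonneg \<phi>_super g_nonneg M potential Y, of n] M
    by (smt (verit) \<phi>_def mult_left_le min.cobounded1)
  ultimately have "(\<Sum>y\<in>Y. \<phi> y * (g y * vmeas mu y)) \<le> M"
    by (intro LIMSEQ_le_const2) auto
  then show ?thesis
    using \<phi>_Y by simp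
qed

lemma green_power_summable_of_potential_le:
  assumes \<sigma>_nonneg: "\<And>y. \<sigma> y \<ge> 0" and M: "M \<ge> 0"
    and potential: "\<And>n x. (\<Sum>k<n. (walk_op mu ^^ k) (\<lambda>y. \<sigma> y * green mu y p powr q) x)
                           \<le> M * green mu x p"
  shows "(\<lambda>y. green mu p y powr q * (\<sigma> y * vmeas mu y)) summable_on UNIV"
proof -
  have "(\<lambda>y. \<sigma> y * green mu y p powr q * vmeas mu y) summable_on UNIV \<and>
      (\<Sum>\<^sub>\<infinity>y. \<sigma> y * green mu y p powr q * vmeas mu y) \<le> M"
    using \<sigma>_nonneg vmeas_pos
    by (intro nonneg_summable_on_infsum_le mass_le_of_potential_le_green[OF _ M potential])
      (simp_all add: less_imp_le)
  then show ?thesis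
    by (simp add: green_sym[of p] mult_ac)
qed

lemma green_level_bound_of_potential_le:
  assumes \<sigma>_nonneg: "\<And>y. \<sigma> y \<ge> 0" and M: "M > 0"
    and potential: "\<And>H n x. (\<And>x. H x > 0) \<Longrightarrow> (\<And>x. walk_op mu H x \<le> H x)
        \<Longrightarrow> (\<And>x. H x \<le> green mu x p)
        \<Longrightarrow> (\<Sum>k<n. (walk_op mu ^^ k) (\<lambda>y. \<sigma> y * H y powr q) x) \<le> M * H x"
  shows "green_level_bound mu q (\<lambda>y. \<sigma> y * vmeas mu y) p"
proof -
  have level: "(\<lambda>y. green mu x y * (\<sigma> y * vmeas mu y)) summable_on {y. green mu p y > 1 / r} \<and>
      (\<Sum>\<^sub>\<infinity>y\<in>{y. green mu p y > 1 / r}. green mu x y * (\<sigma> y * vmeas mu y)) \<le> M * r powr (q - 1)"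
    if r: "r > 0" for r x
  proof (rule level_set_green_sum_le[OF \<sigma>_nonneg r])
    define H where "H = (\<lambda>z. min (green mu z p) (1 / r))"
    have "H z > 0" for z
      using green_pos r by (simp add: H_def)
    moreover have "walk_op mu H z \<le> H z" for z
      using walk_op_min_le[of "\<lambda>z. green mu z p" "\<lambda>_. 1 / r" z] walk_op_green_le[of p z]
      by (simp add: H_def walk_op_const)
    ultimately have "(\<Sum>k<n. (walk_op mu ^^ k) (\<lambda>y. \<sigma> y * H y powr q) x) \<le> M * H x" for n
      by (rule potential) (simp add: H_def)
    also have "M * H x \<le> M / r"
      using mult_left_mono[of "H x" "1 / r" M] M by (simp add: H_def)
    finally show "(\<Sum>k<n. (walk_op mu ^^ k) (\<lambda>y. \<sigma> y * H y powr q) x) \<le> M / r" for n .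
  qed
  then have "\<forall>r>1. \<forall>x. (\<lambda>y. green mu x y * (\<sigma> y * vmeas mu y)) summable_on {y. green mu p y > 1 / r} \<and>
      (\<Sum>\<^sub>\<infinity>y\<in>{y. green mu p y > 1 / r}. green mu x y * (\<sigma> y * vmeas mu y)) \<le> M * r powr (q - 1)"
    by simp
  then show ?thesis
    unfolding green_level_bound_def using M zero_less_one by blast
qed

lemma pos_solution_imp_green_conditions:
  assumes q: "q > 1" and \<sigma>_nonneg: "\<And>x. \<sigma> x \<ge> 0"
    and solution: "has_pos_solution mu \<sigma> q" and \<sigma>_p: "\<sigma> p > 0"
  shows "(\<lambda>y. green mu p y powr q * (\<sigma> y * vmeas mu y)) summable_on UNIV"
    and "green_level_bound mu q (\<lambda>y. \<sigma> y * vmeas mu y) p"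
proof -
  obtain u where u_pos: "\<And>x. u x > 0" and u_super: "\<And>x. - laplacian mu u x \<ge> \<sigma> x * u x powr q"
    using solution unfolding has_pos_solution_def by blast
  have u_sol: "walk_op mu u x + \<sigma> x * u x powr q \<le> u x" for x
    using u_super[of x] by (simp add: laplacian_eq_walk_op)
  define c where "c = vmeas mu p * (\<sigma> p * u p powr q)"
  have c: "c > 0"
    using vmeas_pos[of p] \<sigma>_p u_pos[of p] by (simp add: c_def)
  have source_nonneg: "\<sigma> x * u x powr q \<ge> 0" for x
    using \<sigma>_nonneg[of x] by simp
  have u_ge: "c * green mu x p \<le> u x" for x
    using supersolution_ge_green[OF u_sol less_imp_le[OF u_pos] source_nonneg] by (simp add: c_def)
  define M where "M = q * c powr (1 - q) / (q - 1)"
  have M: "M > 0"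
    using q c by (simp add: M_def)
  have potential: "(\<Sum>k<n. (walk_op mu ^^ k) (\<lambda>y. \<sigma> y * H y powr q) x) \<le> M * H x"
    if "\<And>x. H x > 0" "\<And>x. walk_op mu H x \<le> H x" "\<And>x. H x \<le> green mu x p" for H n x
  proof -
    have "c * H z \<le> u z" for z
      by (rule order_trans[OF mult_left_mono[OF that(3) less_imp_le[OF c]] u_ge])
    from sum_walk_iter_source_le[OF q c that(1,2) this u_sol] show ?thesis
      by (simp add: M_def)
  qed
  show "(\<lambda>y. green mu p y powr q * (\<sigma> y * vmeas mu y)) summable_on UNIV"
    using M green_pos walk_op_green_le
    by (intro green_power_summable_of_potential_le[OF \<sigma>_nonneg _ potential]) auto
  show "green_level_bound mu q (\<lambda>y. \<sigma> y * vmeas mu y) p"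
    by (rule green_level_bound_of_potential_le[OF \<sigma>_nonneg M potential])
qed

lemma green_power_three_G_pointwise:
  fixes x y p :: 'a
  assumes \<kappa>: "\<kappa> \<ge> 1" and q: "q > 1" and \<nu>_nonneg: "\<And>y. \<nu> y \<ge> 0"
    and tri: "\<And>x y z. 1 / green mu x y \<le> \<kappa> * (1 / green mu x z + 1 / green mu z y)"
  defines "m \<equiv> green mu x p"
  shows "green mu x y * green mu p y powr q * \<nu> y
           \<le> 2 * \<kappa> * m * (green mu p y powr q * \<nu> y)
             + (2 * \<kappa> * m) powr q * (if green mu p y > m / (2 * \<kappa>) then green mu x y * \<nu> y else 0)"
proof -
  have "green mu x y * green mu p y powr q
      \<le> 2 * \<kappa> * m * green mu p y powr q
        + (if green mu p y > m / (2 * \<kappa>) then (2 * \<kappa> * m) powr q * green mu x y else 0)"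
    using tri[of p y x] tri[of x p y] green_pos[of x p]
    by (intro three_G_product_bound[OF green_pos green_pos _ \<kappa> q])
      (simp_all add: m_def green_sym[of p x] green_sym[of y p] add.commute)
  then have "green mu x y * green mu p y powr q * \<nu> y
      \<le> (2 * \<kappa> * m * green mu p y powr q
        + (if green mu p y > m / (2 * \<kappa>) then (2 * \<kappa> * m) powr q * green mu x y else 0)) * \<nu> y"
    using \<nu>_nonneg[of y] by (rule mult_right_mono)
  then show ?thesis
    by (cases "green mu p y > m / (2 * \<kappa>)") (simp_all add: algebra_simps)
qed

lemma scaled_level_set_sum_le:
  assumes \<kappa>: "\<kappa> \<ge> 1" and q: "q > 1" and r0: "r0 > 0" and C: "C \<ge> 0"
    and \<nu>_nonneg: "\<And>y. \<nu> y \<ge> 0"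
    and level: "\<And>r. r > r0 \<Longrightarrow>
       (\<lambda>y. green mu x y * \<nu> y) summable_on {y. green mu p y > 1 / r} \<and>
       (\<Sum>\<^sub>\<infinity>y\<in>{y. green mu p y > 1 / r}. green mu x y * \<nu> y) \<le> C * r powr (q - 1)"
    and F: "finite F"
  defines "m \<equiv> green mu x p"
  shows "(2 * \<kappa> * m) powr q * (\<Sum>y\<in>F \<inter> {y. green mu p y > m / (2 * \<kappa>)}. green mu x y * \<nu> y)
           \<le> 2 * \<kappa> * m * (C * (2 * \<kappa> * max (2 * \<kappa>) (green mu p p * (r0 + 1))) powr (q - 1))"
proof -
  have m: "m > 0" by (simp add: m_def green_pos)
  define r where "r = max (2 * \<kappa> / m) (r0 + 1)"
  have r: "r > r0" "r > 0"
    using r0 by (auto simp: r_def)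
  have "2 * \<kappa> / m \<le> r"
    by (simp add: r_def)
  then have "1 / r \<le> m / (2 * \<kappa>)"
    using m \<kappa> r by (simp add: field_simps)
  then have "(\<Sum>y\<in>F \<inter> {y. green mu p y > m / (2 * \<kappa>)}. green mu x y * \<nu> y)
      \<le> (\<Sum>\<^sub>\<infinity>y\<in>{y. green mu p y > 1 / r}. green mu x y * \<nu> y)"
    using level[OF r(1)] F green_pos[of x] \<nu>_nonneg
    by (intro finite_sum_le_infsum) (auto intro: mult_nonneg_nonneg less_imp_le)
  also have "\<dots> \<le> C * r powr (q - 1)"
    using level[OF r(1)] by blast
  finally have level_sum: "(\<Sum>y\<in>F \<inter> {y. green mu p y > m / (2 * \<kappa>)}. green mu x y * \<nu> y)
      \<le> C * r powr (q - 1)" .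
  have "m * (2 * \<kappa> / m) \<le> max (2 * \<kappa>) (green mu p p * (r0 + 1))"
    using m by simp
  moreover have "m * (r0 + 1) \<le> green mu p p * (r0 + 1)"
    using green_le_diag[of x p] r0 by (intro mult_right_mono) (auto simp: m_def)
  ultimately have "m * r \<le> max (2 * \<kappa>) (green mu p p * (r0 + 1))"
    by (auto simp: r_def max_def)
  then have R: "(2 * \<kappa> * m * r) powr (q - 1)
      \<le> (2 * \<kappa> * max (2 * \<kappa>) (green mu p p * (r0 + 1))) powr (q - 1)"
    using \<kappa> m r q by (intro powr_mono2) auto
  have "(2 * \<kappa> * m) powr q * (\<Sum>y\<in>F \<inter> {y. green mu p y > m / (2 * \<kappa>)}. green mu x y * \<nu> y)
      \<le> C * ((2 * \<kappa> * m) powr q * r powr (q - 1))"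
    using mult_left_mono[OF level_sum, of "(2 * \<kappa> * m) powr q"] by (simp add: mult_ac)
  also have "(2 * \<kappa> * m) powr q * r powr (q - 1) = 2 * \<kappa> * m * (2 * \<kappa> * m * r) powr (q - 1)"
    using \<kappa> m r powr_mult_base[of "2 * \<kappa> * m" "q - 1"] by (simp add: powr_mult)
  also have "C * \<dots> \<le> C * (2 * \<kappa> * m * (2 * \<kappa> * max (2 * \<kappa>) (green mu p p * (r0 + 1))) powr (q - 1))"
    using R C \<kappa> m by (intro mult_left_mono) auto
  finally show ?thesis
    by (simp add: mult_ac)
qed

text \<open>
  Under (3G), y with \<open>g(p,y) \<le> g(x,p)/(2\<kappa>)\<close> satisfies \<open>g(x,y) \<le> 2\<kappa> g(x,p)\<close>; the
  remaining y form a level set of \<open>g(p,\<cdot>)\<close>, controlled at \<open>r \<approx> 2\<kappa>/g(x,p)\<close>.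
\<close>

lemma sum_green_power_le_three_G:
  assumes \<kappa>: "\<kappa> \<ge> 1" and q: "q > 1" and r0: "r0 > 0" and C: "C \<ge> 0"
    and tri: "\<And>x y z. 1 / green mu x y \<le> \<kappa> * (1 / green mu x z + 1 / green mu z y)"
    and \<nu>_nonneg: "\<And>y. \<nu> y \<ge> 0"
    and summable: "(\<lambda>y. green mu p y powr q * \<nu> y) summable_on UNIV"
    and level: "\<And>r. r > r0 \<Longrightarrow>
       (\<lambda>y. green mu x y * \<nu> y) summable_on {y. green mu p y > 1 / r} \<and>
       (\<Sum>\<^sub>\<infinity>y\<in>{y. green mu p y > 1 / r}. green mu x y * \<nu> y) \<le> C * r powr (q - 1)"
    and F: "finite F"
  shows "(\<Sum>y\<in>F. green mu x y * green mu p y powr q * \<nu> y)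
           \<le> 2 * \<kappa> * ((\<Sum>\<^sub>\<infinity>y. green mu p y powr q * \<nu> y)
               + C * (2 * \<kappa> * max (2 * \<kappa>) (green mu p p * (r0 + 1))) powr (q - 1)) * green mu x p"
proof -
  define m where "m = green mu x p"
  have m: "m > 0" by (simp add: m_def green_pos)
  have "(\<Sum>y\<in>F. green mu x y * green mu p y powr q * \<nu> y)
      \<le> (\<Sum>y\<in>F. 2 * \<kappa> * m * (green mu p y powr q * \<nu> y)
          + (2 * \<kappa> * m) powr q * (if green mu p y > m / (2 * \<kappa>) then green mu x y * \<nu> y else 0))"
    unfolding m_def by (intro sum_mono green_power_three_G_pointwise[OF \<kappa> q \<nu>_nonneg tri])
  also have "\<dots> = 2 * \<kappa> * m * (\<Sum>y\<in>F. green mu p y powr q * \<nu> y)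
        + (2 * \<kappa> * m) powr q * (\<Sum>y\<in>F \<inter> {y. green mu p y > m / (2 * \<kappa>)}. green mu x y * \<nu> y)"
    using F by (simp add: sum.distrib sum_distrib_left sum.inter_restrict)
  also have "\<dots> \<le> 2 * \<kappa> * m * (\<Sum>\<^sub>\<infinity>y. green mu p y powr q * \<nu> y)
        + 2 * \<kappa> * m * (C * (2 * \<kappa> * max (2 * \<kappa>) (green mu p p * (r0 + 1))) powr (q - 1))"
  proof (rule add_mono)
    show "2 * \<kappa> * m * (\<Sum>y\<in>F. green mu p y powr q * \<nu> y)
        \<le> 2 * \<kappa> * m * (\<Sum>\<^sub>\<infinity>y. green mu p y powr q * \<nu> y)"
      using summable F \<nu>_nonneg \<kappa> m by (intro mult_left_mono finite_sum_le_infsum) simp_all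
    show "(2 * \<kappa> * m) powr q * (\<Sum>y\<in>F \<inter> {y. green mu p y > m / (2 * \<kappa>)}. green mu x y * \<nu> y)
        \<le> 2 * \<kappa> * m * (C * (2 * \<kappa> * max (2 * \<kappa>) (green mu p p * (r0 + 1))) powr (q - 1))"
      unfolding m_def by (rule scaled_level_set_sum_le[OF \<kappa> q r0 C \<nu>_nonneg level F])
  qed
  finally show ?thesis
    by (simp add: m_def algebra_simps)
qed

lemma green_power_potential_le:
  assumes q: "q > 1" and \<sigma>_nonneg: "\<And>x. \<sigma> x \<ge> 0" and three_G: "three_G mu"
    and summable: "(\<lambda>y. green mu p y powr q * (\<sigma> y * vmeas mu y)) summable_on UNIV"
    and level: "green_level_bound mu q (\<lambda>y. \<sigma> y * vmeas mu y) p"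
  obtains K where "K > 0"
    and "\<And>x. (\<lambda>y. visits mu x y * (\<sigma> y * green mu y p powr q)) summable_on UNIV \<and>
             (\<Sum>\<^sub>\<infinity>y. visits mu x y * (\<sigma> y * green mu y p powr q)) \<le> K * green mu x p"
proof -
  obtain \<kappa> where \<kappa>: "\<kappa> \<ge> 1"
    and tri: "\<And>x y z. 1 / green mu x y \<le> \<kappa> * (1 / green mu x z + 1 / green mu z y)"
    using three_G unfolding three_G_def by blast
  define \<nu> where "\<nu> = (\<lambda>y. \<sigma> y * vmeas mu y)"
  obtain r0 C where r0: "r0 > 0" and C: "C > 0"
    and level_r: "\<And>r x. r > r0 \<Longrightarrow>
       (\<lambda>y. green mu x y * \<nu> y) summable_on {y. green mu p y > 1 / r} \<and>
       (\<Sum>\<^sub>\<infinity>y\<in>{y. green mu p y > 1 / r}. green mu x y * \<nu> y) \<le> C * r powr (q - 1)"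
    using level unfolding green_level_bound_def \<nu>_def by blast
  have \<nu>_nonneg: "\<nu> y \<ge> 0" for y
    using \<sigma>_nonneg[of y] vmeas_pos[of y] by (simp add: \<nu>_def)
  define K where "K = 2 * \<kappa> * ((\<Sum>\<^sub>\<infinity>y. green mu p y powr q * \<nu> y)
      + C * (2 * \<kappa> * max (2 * \<kappa>) (green mu p p * (r0 + 1))) powr (q - 1))"
  have K: "K > 0"
    using \<nu>_nonneg \<kappa> C by (simp add: K_def add_nonneg_pos infsum_nonneg)
  have visits_eq: "visits mu x y * (\<sigma> y * green mu y p powr q)
      = green mu x y * green mu p y powr q * \<nu> y" for x y
    using green_mult_vmeas[of x y] by (simp add: \<nu>_def green_sym[of y p] mult_ac)
  have "(\<lambda>y. visits mu x y * (\<sigma> y * green mu y p powr q)) summable_on UNIV \<and>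
      (\<Sum>\<^sub>\<infinity>y. visits mu x y * (\<sigma> y * green mu y p powr q)) \<le> K * green mu x p" for x
    unfolding visits_eq
  proof (rule nonneg_summable_on_infsum_le)
    show "green mu x y * green mu p y powr q * \<nu> y \<ge> 0" for y
      using \<nu>_nonneg[of y] green_pos[of x y] by simp
    fix F :: "'a set" assume "finite F"
    then show "(\<Sum>y\<in>F. green mu x y * green mu p y powr q * \<nu> y) \<le> K * green mu x p"
      unfolding K_def using \<nu>_nonneg summable level_r
      by (intro sum_green_power_le_three_G[OF \<kappa> q r0 less_imp_le[OF C] tri]) (simp_all add: \<nu>_def)
  qed
  with K show ?thesis
    using that by blast
qed

lemma green_conditions_imp_pos_solution:
  assumes q: "q > 1" and \<sigma>_nonneg: "\<And>x. \<sigma> x \<ge> 0" and three_G: "three_G mu"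
    and summable: "(\<lambda>y. green mu p y powr q * (\<sigma> y * vmeas mu y)) summable_on UNIV"
    and level: "green_level_bound mu q (\<lambda>y. \<sigma> y * vmeas mu y) p"
  shows "has_pos_solution mu \<sigma> q"
proof -
  obtain K where K: "K > 0"
    and potential: "\<And>x. (\<lambda>y. visits mu x y * (\<sigma> y * green mu y p powr q)) summable_on UNIV \<and>
          (\<Sum>\<^sub>\<infinity>y. visits mu x y * (\<sigma> y * green mu y p powr q)) \<le> K * green mu x p"
    using green_power_potential_le[OF assms] by blast
  define F where "F = (\<lambda>x. \<Sum>\<^sub>\<infinity>y. visits mu x y * (\<sigma> y * green mu y p powr q))"
  show ?thesis
  proof (rule pos_solution_of_potential_le[OF q \<sigma>_nonneg green_pos walk_op_green_le _ _ K])
    show "F x \<ge> 0" for x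
      unfolding F_def using visits_nonneg \<sigma>_nonneg by (intro infsum_nonneg) simp
    show "walk_op mu F x + \<sigma> x * green mu x p powr q = F x" for x
      unfolding F_def using potential by (intro walk_op_potential) blast
    show "F x \<le> K * green mu x p" for x
      using potential by (simp add: F_def)
  qed
qed

end

theorem theorem1p5:
  fixes mu :: "'a \<Rightarrow> 'a \<Rightarrow> real" and \<sigma> :: "'a \<Rightarrow> real" and q :: real
  assumes "weighted_graph mu" and "infinite (UNIV :: 'a set)"
    and "connected_graph mu" and "locally_finite mu" and "non_parabolic mu"
    and "q > 1" and "\<forall>x. \<sigma> x \<ge> 0" and "\<exists>x. \<sigma> x \<noteq> 0"
  defines "\<nu> \<equiv> (\<lambda>y. \<sigma> y * vmeas mu y)"
  shows
    "(has_pos_solution mu \<sigma> q \<longrightarrow>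
       (\<forall>p. \<sigma> p > 0 \<longrightarrow>
          (\<lambda>y. green mu p y powr q * \<nu> y) summable_on UNIV \<and>
          (\<exists>r0>0. \<exists>C>0. \<forall>r>r0. \<forall>x.
             (\<lambda>y. green mu x y * \<nu> y) summable_on {y. green mu p y > 1 / r} \<and>
             (\<Sum>\<^sub>\<infinity>y\<in>{y. green mu p y > 1 / r}. green mu x y * \<nu> y) \<le> C * r powr (q - 1))))
     \<and>
     ((three_G mu \<and>
       (\<exists>p. (\<lambda>y. green mu p y powr q * \<nu> y) summable_on UNIV \<and>
          (\<exists>r0>0. \<exists>C>0. \<forall>r>r0. \<forall>x.
             (\<lambda>y. green mu x y * \<nu> y) summable_on {y. green mu p y > 1 / r} \<and>
             (\<Sum>\<^sub>\<infinity>y\<in>{y. green mu p y > 1 / r}. green mu x y * \<nu> y) \<le> C * r powr (q - 1))))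
      \<longrightarrow> has_pos_solution mu \<sigma> q)"
proof -
  have "\<exists>a b :: 'a. a \<noteq> b"
    using assms(2) by (metis finite.emptyI finite_insert insertI1 subsetI finite_subset)
  with assms(1,3-5) interpret transient_graph mu
    by unfold_locales
  have \<sigma>_nonneg: "\<And>x. \<sigma> x \<ge> 0"
    using assms(7) by blast
  show ?thesis
    using pos_solution_imp_green_conditions[where \<sigma> = \<sigma>, OF assms(6) \<sigma>_nonneg]
      green_conditions_imp_pos_solution[where \<sigma> = \<sigma>, OF assms(6) \<sigma>_nonneg]
    unfolding \<nu>_def green_level_bound_def by blast
qed

end
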